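(* Let $\Phi$ be a Leonard system in $\mathcal A$ with parameter array $(\theta_i,\theta^*_i,i=0..d;\varphi_j,\phi_j,j=1..d)$ and let $\nu=\mathrm{tr}(E_0E^*_0)^{-1}$. Then $$\nu=\frac{\eta_d(\theta_0)\,\eta^*_d(\theta^*_0)}{\phi_1\phi_2\cdots\phi_d}.$$
   Context: Let $\mathbb K$ be a field, $d\ge 0$ an integer, and $\mathcal A$ a $\mathbb K$-algebra isomorphic to $\mathrm{Mat}_{d+1}(\mathbb K)$, with identity $I$ and trace $\mathrm{tr}$. An element $A\in\mathcal A$ is multiplicity-free if it has $d+1$ mutually distinct eigenvalues in $\mathbb K$; if $\theta_0,\dots,\theta_d$ is an ordering of them, the primitive idempotent of $A$ associated with $\theta_i$ is $E_i=\prod_{j\ne i}(A-\theta_jI)/(\theta_i-\theta_j)$. A Leonard system in $\mathcal A$ is a sequence $\Phi=(A;A^*;\{E_i\}_{i=0}^d;\{E^*_i\}_{i=0}^d)$ such that: (i) $A,A^*$ are multiplicity-free; (ii) $E_0,\dots,E_d$ is an ordering of the primitive idempotents of $A$; (iii) $E^*_0,\dots,E^*_d$ is an ordering of those of $A^*$; (iv) $E_iA^*E_j=0$ if $|i-j|>1$ and $\ne0$ if $|i-j|=1$ $(0\le i,j\le d)$; (v) $E^*_iAE^*_j=0$ if $|i-j|>1$ and $\neq0$ if $|i-j|=1$ $(0\le i,j\le d)$. $\theta_i$ (resp. $\theta^*_i$) is the eigenvalue of $A$ (resp. $A^*$) for $E_i$ (resp. $E^*_i$). One has $\mathrm{tr}(E_0E^*_0)\neq0$.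 It is known that there exist unique nonzero scalars $\varphi_1,\dots,\varphi_d\in\mathbb K$ (first split sequence) such that for some $\mathbb K$-algebra isomorphism $\natural:\mathcal A\to\mathrm{Mat}_{d+1}(\mathbb K)$, $A^\natural$ is lower bidiagonal with diagonal $\theta_0,\dots,\theta_d$ and subdiagonal entries all $1$, and $A^{*\natural}$ is upper bidiagonal with diagonal $\theta^*_0,\dots,\theta^*_d$ and $(A^{*\natural})_{i-1,i}=\varphi_i$. The second split sequence $\phi_1,\dots,\phi_d$ is the first split sequence of $(A;A^*;\{E_{d-i}\}_{i=0}^d;\{E^*_i\}_{i=0}^d)$. Polynomials: $\eta_i=\prod_{h=0}^{i-1}(\lambda-\theta_{d-h})$, $\eta^*_i=\prod_{h=0}^{i-1}(\lambda-\theta^*_{d-h})$. *)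

theory Defs
  imports "Jordan_Normal_Form.Char_Poly"
begin

text \<open>We work in the concrete algebra Mat_{d+1}(K) of (d+1)x(d+1) matrices over a field.\<close>

definition mat_trace :: "'a::comm_ring_1 mat \<Rightarrow> 'a" where
  "mat_trace M = (\<Sum>i<dim_row M. M $$ (i,i))"

definition alg_iso :: "nat \<Rightarrow> ('a::field mat \<Rightarrow> 'a mat) \<Rightarrow> bool" where
  "alg_iso n f \<longleftrightarrow>
     bij_betw f (carrier_mat n n) (carrier_mat n n) \<and>
     (\<forall>X\<in>carrier_mat n n. \<forall>Y\<in>carrier_mat n n.
        f (X * Y) = f X * f Y \<and> f (X + Y) = f X + f Y) \<and>
     (\<forall>c. \<forall>X\<in>carrier_mat n n. f (c \<cdot>\<^sub>m X) = c \<cdot>\<^sub>m f X) \<and>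
     f (1\<^sub>m n) = 1\<^sub>m n"

definition mult_free :: "nat \<Rightarrow> 'a::field mat \<Rightarrow> bool" where
  "mult_free d A \<longleftrightarrow> (\<exists>th. inj_on th {..d} \<and> (\<forall>i\<le>d. eigenvalue A (th i)))"

definition prim_idem :: "nat \<Rightarrow> 'a::field mat \<Rightarrow> (nat \<Rightarrow> 'a) \<Rightarrow> nat \<Rightarrow> 'a mat" where
  "prim_idem d A th i =
     foldr (\<lambda>j M. ((1 / (th i - th j)) \<cdot>\<^sub>m (A - th j \<cdot>\<^sub>m 1\<^sub>m (d+1))) * M)
           (filter (\<lambda>j. j \<noteq> i) [0..<d+1]) (1\<^sub>m (d+1))"

definition idem_ordering :: "nat \<Rightarrow> 'a::field mat \<Rightarrow> (nat \<Rightarrow> 'a mat) \<Rightarrow> bool" where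
  "idem_ordering d A E \<longleftrightarrow>
     (\<exists>th. inj_on th {..d} \<and> (\<forall>i\<le>d. eigenvalue A (th i)) \<and> (\<forall>i\<le>d. E i = prim_idem d A th i))"

definition leonard_system ::
  "nat \<Rightarrow> 'a::field mat \<Rightarrow> 'a mat \<Rightarrow> (nat \<Rightarrow> 'a mat) \<Rightarrow> (nat \<Rightarrow> 'a mat) \<Rightarrow> bool" where
  "leonard_system d A As E Es \<longleftrightarrow>
     A \<in> carrier_mat (d+1) (d+1) \<and> As \<in> carrier_mat (d+1) (d+1) \<and>
     mult_free d A \<and> mult_free d As \<and>
     idem_ordering d A E \<and> idem_ordering d As Es \<and>
     (\<forall>i\<le>d. \<forall>j\<le>d.
        (j + 1 < i \<or> i + 1 < j \<longrightarrow> E i * As * E j = 0\<^sub>m (d+1) (d+1)) \<and>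
        (i = j + 1 \<or> j = i + 1 \<longrightarrow> E i * As * E j \<noteq> 0\<^sub>m (d+1) (d+1))) \<and>
     (\<forall>i\<le>d. \<forall>j\<le>d.
        (j + 1 < i \<or> i + 1 < j \<longrightarrow> Es i * A * Es j = 0\<^sub>m (d+1) (d+1)) \<and>
        (i = j + 1 \<or> j = i + 1 \<longrightarrow> Es i * A * Es j \<noteq> 0\<^sub>m (d+1) (d+1)))"

definition split_seq ::
  "nat \<Rightarrow> 'a::field mat \<Rightarrow> 'a mat \<Rightarrow> (nat \<Rightarrow> 'a) \<Rightarrow> (nat \<Rightarrow> 'a) \<Rightarrow> (nat \<Rightarrow> 'a) \<Rightarrow> bool" where
  "split_seq d A As th ths phi \<longleftrightarrow>
     (\<forall>j\<in>{1..d}. phi j \<noteq> 0) \<and>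
     (\<exists>f. alg_iso (d+1) f \<and>
        f A = mat (d+1) (d+1) (\<lambda>(i,j). if i = j then th i else if i = j + 1 then 1 else 0) \<and>
        f As = mat (d+1) (d+1) (\<lambda>(i,j). if i = j then ths i else if j = i + 1 then phi j else 0))"

end

theory Submission
  imports Defs
begin

(* Transport everything along the isomorphism f of the split sequence: f A is lower
   bidiagonal with diagonal theta_d, ..., theta_0 and f As is upper bidiagonal with diagonal
   theta*_0, ..., theta*_d and superdiagonal phi_1, ..., phi_d.  Multiplying out the
   triangular factors of the primitive idempotents, f(Es 0) is supported on row 0 with entries
   1 at (0,0) and phi_1 ... phi_d / eta*_d(theta*_0) at (0,d), and, after reversing rows and
   columns, f(E 0) is supported on row d with entries 1 at (d,d) and 1 / eta_d(theta_0) at (d,0).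
   A matrix P supported on a single row r with P_rr = 1 satisfies P X P = (P X)_rr P; pulling
   this back along f shows that E 0 is an idempotent with scalar corner E 0 X E 0, hence of
   trace 1, and so tr(E 0 Es 0) = tr(E 0 Es 0 E 0) = (f(E 0) f(Es 0))_dd
   = f(E 0)_d0 f(Es 0)_0d. *)

lemma index_mult_mat_sum:
  assumes "A \<in> carrier_mat n n" "B \<in> carrier_mat n n" "i < n" "j < n"
  shows "(A * B) $$ (i,j) = (\<Sum>l<n. A $$ (i,l) * B $$ (l,j))"
  using assms by (auto simp: scalar_prod_def lessThan_atLeast0 intro!: sum.cong)

lemma mat_trace_mult_comm:
  assumes A: "A \<in> carrier_mat n n" and B: "B \<in> carrier_mat n n"
  shows "mat_trace (A * B) = mat_trace (B * A)"
proof -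
  have "mat_trace (A * B) = (\<Sum>i<n. \<Sum>l<n. A $$ (i,l) * B $$ (l,i))"
    using A B by (simp add: mat_trace_def index_mult_mat_sum[OF A B] del: index_mult_mat(1))
  also have "\<dots> = (\<Sum>l<n. \<Sum>i<n. B $$ (l,i) * A $$ (i,l))"
    by (subst sum.swap) (simp add: mult.commute)
  also have "\<dots> = mat_trace (B * A)"
    using A B by (simp add: mat_trace_def index_mult_mat_sum[OF B A] del: index_mult_mat(1))
  finally show ?thesis .
qed

lemma mat_trace_smult: "A \<in> carrier_mat n n \<Longrightarrow> mat_trace (c \<cdot>\<^sub>m A) = c * mat_trace A"
  by (simp add: mat_trace_def sum_distrib_left)

definition supported_on_row :: "nat \<Rightarrow> nat \<Rightarrow> 'a::zero mat \<Rightarrow> bool" where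
  "supported_on_row n r P \<longleftrightarrow> P \<in> carrier_mat n n \<and> (\<forall>i<n. \<forall>j<n. i \<noteq> r \<longrightarrow> P $$ (i,j) = 0)"

lemma sum_mult_supported_on_row:
  fixes P :: "'a::semiring_0 mat"
  assumes "supported_on_row n r P" "r < n" "j < n"
  shows "(\<Sum>k<n. g k * P $$ (k,j)) = g r * P $$ (r,j)"
proof -
  have "(\<Sum>k<n. g k * P $$ (k,j)) = (\<Sum>k<n. if k = r then g r * P $$ (r,j) else 0)"
    using assms by (intro sum.cong) (auto simp: supported_on_row_def)
  also have "\<dots> = g r * P $$ (r,j)"
    using assms by simp
  finally show ?thesis .
qed

lemma supported_on_row_mult:
  fixes P :: "'a::semiring_0 mat"
  assumes P: "supported_on_row n r P" and Y: "Y \<in> carrier_mat n n"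
  shows "supported_on_row n r (P * Y)"
proof -
  have Pc: "P \<in> carrier_mat n n"
    using P by (simp add: supported_on_row_def)
  have "(P * Y) $$ (i,j) = 0" if "i < n" "j < n" "i \<noteq> r" for i j
    using P that by (simp add: index_mult_mat_sum[OF Pc Y] supported_on_row_def del: index_mult_mat(1))
  then show ?thesis
    using Pc Y by (simp add: supported_on_row_def)
qed

lemma supported_on_row_sandwich:
  fixes P :: "'a::comm_semiring_1 mat"
  assumes P: "supported_on_row n r P" and r: "r < n" and Y: "Y \<in> carrier_mat n n"
  shows "P * Y * P = (P * Y) $$ (r,r) \<cdot>\<^sub>m P"
proof -
  have Pc: "P \<in> carrier_mat n n"
    using P by (simp add: supported_on_row_def)
  have PY: "supported_on_row n r (P * Y)"
    using supported_on_row_mult[OF P Y] .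
  have "(P * Y * P) $$ (i,j) = (P * Y) $$ (r,r) * P $$ (i,j)" if ij: "i < n" "j < n" for i j
  proof -
    have "(P * Y * P) $$ (i,j) = (\<Sum>k<n. (P * Y) $$ (i,k) * P $$ (k,j))"
      using index_mult_mat_sum[of "P * Y" n P] Pc Y ij by simp
    also have "\<dots> = (P * Y) $$ (i,r) * P $$ (r,j)"
      by (rule sum_mult_supported_on_row[OF P r ij(2)])
    also have "\<dots> = (P * Y) $$ (r,r) * P $$ (i,j)"
    proof (cases "i = r")
      case False
      then have "(P * Y) $$ (i,r) = 0" "P $$ (i,j) = 0"
        using P PY ij r unfolding supported_on_row_def by blast+
      then show ?thesis
        by simp
    qed simp
    finally show ?thesis .
  qed
  then show ?thesis
    using Pc Y by (intro eq_matI) auto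
qed

text \<open>For a nonzero idempotent E, all corners E X E being scalar is equivalent to rank one.\<close>
definition rank_one_idempotent :: "nat \<Rightarrow> 'a::field mat \<Rightarrow> bool" where
  "rank_one_idempotent n E \<longleftrightarrow> E \<in> carrier_mat n n \<and> E * E = E \<and> E \<noteq> 0\<^sub>m n n \<and>
     (\<forall>X\<in>carrier_mat n n. \<exists>c. E * X * E = c \<cdot>\<^sub>m E)"

lemma supported_on_row_rank_one_idempotent:
  assumes P: "supported_on_row n r P" and r: "r < n" and Prr: "P $$ (r,r) = 1"
  shows "rank_one_idempotent n P"
proof -
  have Pc: "P \<in> carrier_mat n n"
    using P by (simp add: supported_on_row_def)
  have "P * P = 1 \<cdot>\<^sub>m P"
    using supported_on_row_sandwich[OF P r, of "1\<^sub>m n"] Pc Prr by simp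
  also have "\<dots> = P"
    using Pc by (intro eq_matI) auto
  finally have "P * P = P" .
  moreover have "P \<noteq> 0\<^sub>m n n"
    using Prr r by auto
  ultimately show ?thesis
    using supported_on_row_sandwich[OF P r] Pc by (auto simp: rank_one_idempotent_def)
qed

lemma mat_trace_rank_one_idempotent:
  assumes "rank_one_idempotent n E"
  shows "mat_trace E = 1"
proof -
  have E: "E \<in> carrier_mat n n" and idem: "E * E = E" and nz: "E \<noteq> 0\<^sub>m n n"
    and corner: "\<And>X. X \<in> carrier_mat n n \<Longrightarrow> \<exists>c. E * X * E = c \<cdot>\<^sub>m E"
    using assms by (auto simp: rank_one_idempotent_def)
  obtain a b where ab: "a < n" "b < n" "E $$ (a,b) \<noteq> 0"
    using nz E by (metis eq_matI carrier_matD index_zero_mat)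
  define X :: "'a mat" where "X = mat n n (\<lambda>(i,j). if i = b \<and> j = a then 1 else 0)"
  have X: "X \<in> carrier_mat n n"
    by (simp add: X_def)
  \<comment> \<open>X is the matrix unit at (b,a), so E X E is the outer product of column b and row a of E\<close>
  have EXE: "(E * X * E) $$ (i,j) = E $$ (i,b) * E $$ (a,j)" if "i < n" "j < n" for i j
  proof -
    have EX: "(E * X) $$ (i,k) = (if k = a then E $$ (i,b) else 0)" if "k < n" for k
    proof -
      have "(E * X) $$ (i,k) = (\<Sum>l<n. E $$ (i,l) * X $$ (l,k))"
        using index_mult_mat_sum[OF E X \<open>i < n\<close> that] .
      also have "\<dots> = (\<Sum>l<n. if l = b then (if k = a then E $$ (i,b) else 0) else 0)"
        using that by (intro sum.cong) (auto simp: X_def)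
      finally show ?thesis
        using ab by simp
    qed
    have "(E * X * E) $$ (i,j) = (\<Sum>k<n. (E * X) $$ (i,k) * E $$ (k,j))"
      using index_mult_mat_sum[of "E * X" n E] E X that by simp
    also have "\<dots> = (\<Sum>k<n. if k = a then E $$ (i,b) * E $$ (a,j) else 0)"
      by (intro sum.cong) (auto simp: EX)
    finally show ?thesis
      using ab by simp
  qed
  obtain c where c: "E * X * E = c \<cdot>\<^sub>m E"
    using corner[OF X] by blast
  have entry: "E $$ (i,b) * E $$ (a,j) = c * E $$ (i,j)" if "i < n" "j < n" for i j
    using EXE[OF that] c E that by (metis carrier_matD index_smult_mat(1))
  have "c = E $$ (a,b)"
    using entry[OF ab(1,2)] ab(3) by simp
  then have diag: "E $$ (a,b) * E $$ (i,i) = E $$ (a,i) * E $$ (i,b)" if "i < n" for i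
    using entry[OF that that] by (simp add: mult.commute)
  have "E $$ (a,b) * mat_trace E = (\<Sum>i<n. E $$ (a,i) * E $$ (i,b))"
    using E diag by (simp add: mat_trace_def sum_distrib_left)
  also have "\<dots> = E $$ (a,b)"
    using index_mult_mat_sum[OF E E ab(1,2)] idem by simp
  finally show ?thesis
    using ab(3) by simp
qed

lemma mat_trace_mult_rank_one_idempotent:
  assumes E: "rank_one_idempotent n E" and Y: "Y \<in> carrier_mat n n"
    and corner: "E * Y * E = c \<cdot>\<^sub>m E"
  shows "mat_trace (E * Y) = c"
proof -
  have Ec: "E \<in> carrier_mat n n" and idem: "E * E = E"
    using E by (auto simp: rank_one_idempotent_def)
  have "mat_trace (E * Y) = mat_trace (E * (E * Y))"
    using Ec Y idem by (metis assoc_mult_mat)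
  also have "\<dots> = mat_trace (E * Y * E)"
    using Ec Y by (simp add: mat_trace_mult_comm[of E n "E * Y"])
  also have "\<dots> = c"
    using corner Ec mat_trace_rank_one_idempotent[OF E] by (simp add: mat_trace_smult)
  finally show ?thesis .
qed

definition alg_hom :: "nat \<Rightarrow> ('a::field mat \<Rightarrow> 'a mat) \<Rightarrow> bool" where
  "alg_hom n f \<longleftrightarrow> (\<forall>X\<in>carrier_mat n n. f X \<in> carrier_mat n n) \<and>
     (\<forall>X\<in>carrier_mat n n. \<forall>Y\<in>carrier_mat n n. f (X * Y) = f X * f Y \<and> f (X + Y) = f X + f Y) \<and>
     (\<forall>c. \<forall>X\<in>carrier_mat n n. f (c \<cdot>\<^sub>m X) = c \<cdot>\<^sub>m f X) \<and> f (1\<^sub>m n) = 1\<^sub>m n"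

lemma alg_iso_imp_alg_hom: "alg_iso n f \<Longrightarrow> alg_hom n f"
  unfolding alg_iso_def alg_hom_def bij_betw_def by auto

lemma alg_hom_carrier_mat: "alg_hom n f \<Longrightarrow> X \<in> carrier_mat n n \<Longrightarrow> f X \<in> carrier_mat n n"
  unfolding alg_hom_def by blast

lemma alg_hom_mult:
  "alg_hom n f \<Longrightarrow> X \<in> carrier_mat n n \<Longrightarrow> Y \<in> carrier_mat n n \<Longrightarrow> f (X * Y) = f X * f Y"
  unfolding alg_hom_def by blast

lemma alg_hom_smult: "alg_hom n f \<Longrightarrow> X \<in> carrier_mat n n \<Longrightarrow> f (c \<cdot>\<^sub>m X) = c \<cdot>\<^sub>m f X"
  unfolding alg_hom_def by blast

lemma alg_iso_eqD:
  "alg_iso n f \<Longrightarrow> f X = f Y \<Longrightarrow> X \<in> carrier_mat n n \<Longrightarrow> Y \<in> carrier_mat n n \<Longrightarrow> X = Y"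
  unfolding alg_iso_def bij_betw_def inj_on_def by blast

lemma alg_hom_minus:
  assumes f: "alg_hom n f" and X: "X \<in> carrier_mat n n" and Y: "Y \<in> carrier_mat n n"
  shows "f (X - Y) = f X - f Y"
proof -
  have XY: "X - Y \<in> carrier_mat n n"
    using Y by (rule minus_carrier_mat)
  have "X = (X - Y) + Y"
    using X Y by (intro eq_matI) auto
  then have "f X = f (X - Y) + f Y"
    using f XY Y unfolding alg_hom_def by metis
  moreover have "f (X - Y) \<in> carrier_mat n n" "f Y \<in> carrier_mat n n"
    using f XY Y unfolding alg_hom_def by auto
  ultimately show ?thesis
    by (intro eq_matI) auto
qed

lemma foldr_mult_carrier_mat:
  assumes "\<And>j. Y j \<in> carrier_mat n n" "M \<in> carrier_mat n n"
  shows "foldr (\<lambda>j N. Y j * N) js M \<in> carrier_mat n n"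
  using assms by (induction js) (auto intro!: mult_carrier_mat[of _ n n])

lemma prim_idem_carrier_mat:
  "X \<in> carrier_mat (d+1) (d+1) \<Longrightarrow> prim_idem d X t i \<in> carrier_mat (d+1) (d+1)"
  unfolding prim_idem_def by (intro foldr_mult_carrier_mat) (auto simp: minus_carrier_mat)

lemma alg_hom_prim_idem:
  assumes f: "alg_hom (d+1) f" and X: "X \<in> carrier_mat (d+1) (d+1)"
  shows "f (prim_idem d X t i) = prim_idem d (f X) t i"
proof -
  let ?I = "1\<^sub>m (d+1)"
  have "f (foldr (\<lambda>j M. (c j \<cdot>\<^sub>m (X - t j \<cdot>\<^sub>m ?I)) * M) js ?I)
      = foldr (\<lambda>j M. (c j \<cdot>\<^sub>m (f X - t j \<cdot>\<^sub>m ?I)) * M) js ?I" for c js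
  proof (induction js)
    case Nil
    then show ?case
      using f unfolding alg_hom_def by auto
  next
    case (Cons a js)
    let ?F = "foldr (\<lambda>j M. (c j \<cdot>\<^sub>m (X - t j \<cdot>\<^sub>m ?I)) * M) js ?I"
    have F: "?F \<in> carrier_mat (d+1) (d+1)"
      using X by (intro foldr_mult_carrier_mat) (auto simp: minus_carrier_mat)
    have Xa: "X - t a \<cdot>\<^sub>m ?I \<in> carrier_mat (d+1) (d+1)"
      using X by (simp add: minus_carrier_mat)
    have "f ((c a \<cdot>\<^sub>m (X - t a \<cdot>\<^sub>m ?I)) * ?F) = c a \<cdot>\<^sub>m f (X - t a \<cdot>\<^sub>m ?I) * f ?F"
      using f F Xa unfolding alg_hom_def by auto
    also have "f (X - t a \<cdot>\<^sub>m ?I) = f X - t a \<cdot>\<^sub>m ?I"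
      using alg_hom_minus[OF f X, of "t a \<cdot>\<^sub>m ?I"] f unfolding alg_hom_def by auto
    finally show ?case
      using Cons by simp
  qed
  then show ?thesis
    unfolding prim_idem_def .
qed

lemma alg_iso_reflects_corner:
  assumes f: "alg_iso n f" and E: "E \<in> carrier_mat n n" and X: "X \<in> carrier_mat n n"
    and corner: "f E * f X * f E = c \<cdot>\<^sub>m f E"
  shows "E * X * E = c \<cdot>\<^sub>m E"
proof -
  have hom: "alg_hom n f"
    using alg_iso_imp_alg_hom[OF f] .
  have "f (E * X * E) = f E * f X * f E"
    using E X by (simp add: alg_hom_mult[OF hom] del: assoc_mult_mat)
  also have "\<dots> = f (c \<cdot>\<^sub>m E)"
    using corner E by (simp add: alg_hom_smult[OF hom])
  finally show ?thesis
    using alg_iso_eqD[OF f] E X by simp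
qed

lemma alg_iso_reflects_rank_one_idempotent:
  assumes f: "alg_iso n f" and E: "E \<in> carrier_mat n n" and fE: "rank_one_idempotent n (f E)"
  shows "rank_one_idempotent n E"
proof -
  have hom: "alg_hom n f"
    using alg_iso_imp_alg_hom[OF f] .
  have "f (E * E) = f E"
    using fE alg_hom_mult[OF hom E E] by (simp add: rank_one_idempotent_def)
  then have "E * E = E"
    using alg_iso_eqD[OF f] E by simp
  moreover have "E \<noteq> 0\<^sub>m n n"
  proof
    assume "E = 0\<^sub>m n n"
    then have "f E = 0 \<cdot>\<^sub>m f E"
      using alg_hom_smult[OF hom E, of 0] by simp
    also have "\<dots> = 0\<^sub>m n n"
      using fE by (intro eq_matI) (auto simp: rank_one_idempotent_def)
    finally show False
      using fE by (simp add: rank_one_idempotent_def)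
  qed
  moreover have "\<exists>c. E * X * E = c \<cdot>\<^sub>m E" if X: "X \<in> carrier_mat n n" for X
  proof -
    obtain c where "f E * f X * f E = c \<cdot>\<^sub>m f E"
      using fE alg_hom_carrier_mat[OF hom X] unfolding rank_one_idempotent_def by blast
    then show ?thesis
      using alg_iso_reflects_corner[OF f E X] by blast
  qed
  ultimately show ?thesis
    using E by (simp add: rank_one_idempotent_def)
qed

text \<open>This avoids having to know that algebra automorphisms preserve the trace.\<close>
lemma mat_trace_mult_alg_iso_supported_on_row:
  assumes f: "alg_iso n f" and E: "E \<in> carrier_mat n n" and Y: "Y \<in> carrier_mat n n"
    and fE: "supported_on_row n r (f E)" and r: "r < n" and fE_rr: "f E $$ (r,r) = 1"
  shows "mat_trace (E * Y) = (f E * f Y) $$ (r,r)"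
proof -
  have hom: "alg_hom n f"
    using alg_iso_imp_alg_hom[OF f] .
  have "rank_one_idempotent n E"
    using alg_iso_reflects_rank_one_idempotent[OF f E]
      supported_on_row_rank_one_idempotent[OF fE r fE_rr] by blast
  moreover have "E * Y * E = (f E * f Y) $$ (r,r) \<cdot>\<^sub>m E"
    using alg_iso_reflects_corner[OF f E Y]
      supported_on_row_sandwich[OF fE r alg_hom_carrier_mat[OF hom Y]] by blast
  ultimately show ?thesis
    using mat_trace_mult_rank_one_idempotent Y by blast
qed

definition rev_mat :: "nat \<Rightarrow> 'a mat \<Rightarrow> 'a mat" where
  "rev_mat d X = mat (d+1) (d+1) (\<lambda>(i,j). X $$ (d-i, d-j))"

lemma rev_mat_rev_mat: "X \<in> carrier_mat (d+1) (d+1) \<Longrightarrow> rev_mat d (rev_mat d X) = X"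
  by (intro eq_matI) (auto simp: rev_mat_def)

lemma alg_hom_rev_mat: "alg_hom (d+1) (rev_mat d)"
  unfolding alg_hom_def
proof (intro conjI ballI allI)
  fix X Y :: "'a mat"
  assume X: "X \<in> carrier_mat (d+1) (d+1)" and Y: "Y \<in> carrier_mat (d+1) (d+1)"
  show "rev_mat d (X + Y) = rev_mat d X + rev_mat d Y"
    using X Y by (intro eq_matI) (auto simp: rev_mat_def)
  have RX: "rev_mat d X \<in> carrier_mat (d+1) (d+1)" and RY: "rev_mat d Y \<in> carrier_mat (d+1) (d+1)"
    by (auto simp: rev_mat_def)
  have "(rev_mat d X * rev_mat d Y) $$ (i,j) = (X * Y) $$ (d-i, d-j)" if "i < d+1" "j < d+1" for i j
  proof -
    have "(rev_mat d X * rev_mat d Y) $$ (i,j) = (\<Sum>l<d+1. X $$ (d-i, d-l) * Y $$ (d-l, d-j))"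
      using index_mult_mat_sum[OF RX RY that] that by (auto simp: rev_mat_def intro!: sum.cong)
    also have "\<dots> = (\<Sum>l<d+1. X $$ (d-i, l) * Y $$ (l, d-j))"
      by (rule sum.reindex_bij_witness[where i="\<lambda>l. d-l" and j="\<lambda>l. d-l"]) auto
    also have "\<dots> = (X * Y) $$ (d-i, d-j)"
      using index_mult_mat_sum[OF X Y, of "d-i" "d-j"] by simp
    finally show ?thesis .
  qed
  then show "rev_mat d (X * Y) = rev_mat d X * rev_mat d Y"
    using RX RY by (intro eq_matI) (auto simp: rev_mat_def)
next
  fix X :: "'a mat" and c
  show "rev_mat d (c \<cdot>\<^sub>m X) = c \<cdot>\<^sub>m rev_mat d X" if "X \<in> carrier_mat (d+1) (d+1)"
    using that by (intro eq_matI) (auto simp: rev_mat_def)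
  show "rev_mat d X \<in> carrier_mat (d+1) (d+1)"
    by (simp add: rev_mat_def)
next
  show "rev_mat d (1\<^sub>m (d+1)) = 1\<^sub>m (d+1)"
    by (intro eq_matI) (auto simp: rev_mat_def)
qed

definition upper_bidiag :: "nat \<Rightarrow> (nat \<Rightarrow> 'a) \<Rightarrow> (nat \<Rightarrow> 'a) \<Rightarrow> 'a::zero mat" where
  "upper_bidiag n D s = mat n n (\<lambda>(i,j). if i = j then D i else if j = i + 1 then s j else 0)"

definition lower_bidiag :: "nat \<Rightarrow> (nat \<Rightarrow> 'a) \<Rightarrow> 'a::zero_neq_one mat" where
  "lower_bidiag n D = mat n n (\<lambda>(i,j). if i = j then D i else if i = j + 1 then 1 else 0)"

lemma rev_mat_lower_bidiag:
  "rev_mat d (lower_bidiag (d+1) (\<lambda>i. D (d - i))) = upper_bidiag (d+1) D (\<lambda>_. 1)"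
  by (intro eq_matI) (auto simp: rev_mat_def lower_bidiag_def upper_bidiag_def)

lemma index_upper_bidiag_minus_mult:
  fixes D s :: "nat \<Rightarrow> 'a::comm_ring_1"
  assumes T: "T \<in> carrier_mat (d+1) (d+1)" and i: "i \<le> d" and j: "j \<le> d"
  shows "((upper_bidiag (d+1) D s - c \<cdot>\<^sub>m 1\<^sub>m (d+1)) * T) $$ (i,j) =
    (D i - c) * T $$ (i,j) + (if i < d then s (i+1) * T $$ (i+1,j) else 0)"
proof -
  let ?X = "upper_bidiag (d+1) D s - c \<cdot>\<^sub>m 1\<^sub>m (d+1)"
  have X: "?X \<in> carrier_mat (d+1) (d+1)"
    by (simp add: upper_bidiag_def minus_carrier_mat)
  have "(?X * T) $$ (i,j) = (\<Sum>l<d+1. ?X $$ (i,l) * T $$ (l,j))"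
    using index_mult_mat_sum[OF X T] i j by simp
  also have "\<dots> = (\<Sum>l<d+1. (if l = i then (D i - c) * T $$ (i,j) else 0) +
      (if l = i + 1 then s (i+1) * T $$ (i+1,j) else 0))"
    using i by (intro sum.cong) (auto simp: upper_bidiag_def)
  also have "\<dots> = (D i - c) * T $$ (i,j) + (if i < d then s (i+1) * T $$ (i+1,j) else 0)"
    using i by (simp add: sum.distrib)
  finally show ?thesis .
qed

lemma foldr_upper_bidiag_minus_entries:
  fixes D s :: "nat \<Rightarrow> 'a::comm_ring_1"
  assumes k: "k \<le> d+1"
  defines "T \<equiv> foldr (\<lambda>l M. (upper_bidiag (d+1) D s - D l \<cdot>\<^sub>m 1\<^sub>m (d+1)) * M) [k..<d+1] (1\<^sub>m (d+1))"
  shows "T \<in> carrier_mat (d+1) (d+1) \<and>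
     (\<forall>i\<le>d. \<forall>j\<le>d. (j < i \<longrightarrow> T $$ (i,j) = 0) \<and> (i + (d+1-k) < j \<longrightarrow> T $$ (i,j) = 0) \<and>
        (i + (d+1-k) = j \<longrightarrow> T $$ (i,j) = (\<Prod>l\<in>{i<..j}. s l)) \<and> (k \<le> i \<longrightarrow> T $$ (i,j) = 0)) \<and>
     T $$ (0,0) = (\<Prod>l\<in>{k..d}. D 0 - D l)"
  unfolding T_def using k
proof (induction k rule: inc_induct)
  case base
  show ?case
    by auto
next
  case (step k)
  let ?X = "upper_bidiag (d+1) D s - D k \<cdot>\<^sub>m 1\<^sub>m (d+1)"
  define T' where "T' = foldr (\<lambda>l M. (upper_bidiag (d+1) D s - D l \<cdot>\<^sub>m 1\<^sub>m (d+1)) * M)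
    [Suc k..<d+1] (1\<^sub>m (d+1))"
  have "[k..<d+1] = k # [Suc k..<d+1]"
    using step.hyps by (simp add: upt_conv_Cons)
  then have T: "foldr (\<lambda>l M. (upper_bidiag (d+1) D s - D l \<cdot>\<^sub>m 1\<^sub>m (d+1)) * M) [k..<d+1] (1\<^sub>m (d+1))
      = ?X * T'"
    by (simp add: T'_def)
  have T'c: "T' \<in> carrier_mat (d+1) (d+1)"
    and IH: "\<And>i j. i \<le> d \<Longrightarrow> j \<le> d \<Longrightarrow> (j < i \<longrightarrow> T' $$ (i,j) = 0) \<and>
      (i + (d+1-Suc k) < j \<longrightarrow> T' $$ (i,j) = 0) \<and>
      (i + (d+1-Suc k) = j \<longrightarrow> T' $$ (i,j) = (\<Prod>l\<in>{i<..j}. s l)) \<and> (Suc k \<le> i \<longrightarrow> T' $$ (i,j) = 0)"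
    and IH00: "T' $$ (0,0) = (\<Prod>l\<in>{Suc k..d}. D 0 - D l)"
    using step.IH unfolding T'_def by blast+
  note entry = index_upper_bidiag_minus_mult[OF T'c]
  have m: "d+1-k = Suc (d+1-Suc k)"
    using step.hyps by simp
  show ?case
    unfolding T
  proof (intro conjI allI impI)
    show "?X * T' \<in> carrier_mat (d+1) (d+1)"
      by (rule mult_carrier_mat[OF _ T'c]) (simp add: upper_bidiag_def minus_carrier_mat)
  next
    fix i j assume ij: "i \<le> d" "j \<le> d"
    show "(?X * T') $$ (i,j) = 0" if "j < i"
      using that entry[OF ij] IH[OF ij] IH[of "i+1" j] ij by auto
    show "(?X * T') $$ (i,j) = 0" if "i + (d+1-k) < j"
      using that entry[OF ij] IH[OF ij] IH[of "i+1" j] ij m by auto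
    show "(?X * T') $$ (i,j) = (\<Prod>l\<in>{i<..j}. s l)" if band: "i + (d+1-k) = j"
    proof -
      have "i < d"
        using band m ij by linarith
      then have "(?X * T') $$ (i,j) = s (i+1) * (\<Prod>l\<in>{i+1<..j}. s l)"
        using entry[OF ij] IH[OF ij] IH[of "i+1" j] ij m band by auto
      also have "{i+1<..j} = {i<..j} - {i+1}"
        by auto
      finally show ?thesis
        using band m by (simp add: prod.remove[symmetric])
    qed
    show "(?X * T') $$ (i,j) = 0" if "k \<le> i"
      using that entry[OF ij] IH[OF ij] IH[of "i+1" j] ij by (cases "i = k") auto
  next
    have "(?X * T') $$ (0,0) = (D 0 - D k) * T' $$ (0,0)"
      using entry[of 0 0] IH[of 1 0] by auto
    also have "\<dots> = (\<Prod>l\<in>{k..d}. D 0 - D l)"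
      using IH00 step.hyps by (simp add: prod.atLeast_Suc_atMost)
    finally show "(?X * T') $$ (0,0) = (\<Prod>l\<in>{k..d}. D 0 - D l)" .
  qed
qed

lemma foldr_smult_mult:
  fixes Y :: "nat \<Rightarrow> 'a::field mat"
  assumes Y: "\<And>j. Y j \<in> carrier_mat n n" and M: "M \<in> carrier_mat n n"
  shows "foldr (\<lambda>j N. (c j \<cdot>\<^sub>m Y j) * N) js M = prod_list (map c js) \<cdot>\<^sub>m foldr (\<lambda>j N. Y j * N) js M"
proof (induction js)
  case Nil
  show ?case
    using M by (intro eq_matI) auto
next
  case (Cons a js)
  let ?F = "foldr (\<lambda>j N. Y j * N) js M"
  have F: "?F \<in> carrier_mat n n"
    using foldr_mult_carrier_mat Y M by blast
  have "(c a \<cdot>\<^sub>m Y a) * (prod_list (map c js) \<cdot>\<^sub>m ?F) = (c a * prod_list (map c js)) \<cdot>\<^sub>m (Y a * ?F)"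
    using Y[of a] F
    by (simp add: mult_smult_assoc_mat[of _ n n _ n] mult_smult_distrib[of _ n n _ n])
      (intro eq_matI, auto)
  then show ?case
    using Cons by simp
qed

lemma prod_diff_nonzero:
  fixes D :: "nat \<Rightarrow> 'a::field"
  assumes "inj_on D {..d}"
  shows "(\<Prod>l\<in>{1..d}. D 0 - D l) \<noteq> 0"
  using assms by (fastforce simp: inj_on_def)

lemma prim_idem_upper_bidiag:
  fixes D s :: "nat \<Rightarrow> 'a::field"
  assumes inj: "inj_on D {..d}"
  defines "P \<equiv> prim_idem d (upper_bidiag (d+1) D s) D 0"
  shows "supported_on_row (d+1) 0 P" and "P $$ (0,0) = 1"
    and "P $$ (0,d) = (\<Prod>l\<in>{1..d}. s l) / (\<Prod>l\<in>{1..d}. D 0 - D l)"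
proof -
  let ?B = "upper_bidiag (d+1) D s"
  define T where "T = foldr (\<lambda>l M. (?B - D l \<cdot>\<^sub>m 1\<^sub>m (d+1)) * M) [1..<d+1] (1\<^sub>m (d+1))"
  have T: "T \<in> carrier_mat (d+1) (d+1)"
    and T_entries: "\<forall>i\<le>d. \<forall>j\<le>d. 1 \<le> i \<longrightarrow> T $$ (i,j) = 0"
    and T00: "T $$ (0,0) = (\<Prod>l\<in>{1..d}. D 0 - D l)"
    and T0d: "T $$ (0,d) = (\<Prod>l\<in>{0<..d}. s l)"
    using foldr_upper_bidiag_minus_entries[of 1 d D s] unfolding T_def by auto
  have "filter (\<lambda>j. j \<noteq> 0) [0..<d+1] = [1..<d+1]"
    by (induction d) auto
  then have "P = foldr (\<lambda>j M. ((1 / (D 0 - D j)) \<cdot>\<^sub>m (?B - D j \<cdot>\<^sub>m 1\<^sub>m (d+1))) * M)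
      [1..<d+1] (1\<^sub>m (d+1))"
    unfolding P_def prim_idem_def by simp
  also have "\<dots> = prod_list (map (\<lambda>j. 1 / (D 0 - D j)) [1..<d+1]) \<cdot>\<^sub>m T"
    unfolding T_def by (rule foldr_smult_mult) (auto simp: upper_bidiag_def minus_carrier_mat)
  also have "prod_list (map (\<lambda>j. 1 / (D 0 - D j)) [1..<d+1]) = 1 / (\<Prod>l\<in>{1..d}. D 0 - D l)"
    by (simp add: prod.distinct_set_conv_list[symmetric] atLeastLessThanSuc_atLeastAtMost prod_dividef
        del: upt_Suc)
  finally have P: "P = (1 / (\<Prod>l\<in>{1..d}. D 0 - D l)) \<cdot>\<^sub>m T" .
  show "supported_on_row (d+1) 0 P"
    using P T T_entries by (auto simp: supported_on_row_def)
  show "P $$ (0,0) = 1"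
    using P T T00 prod_diff_nonzero[OF inj] by simp
  have "{0<..d} = {1..d}"
    by auto
  then show "P $$ (0,d) = (\<Prod>l\<in>{1..d}. s l) / (\<Prod>l\<in>{1..d}. D 0 - D l)"
    using P T T0d by simp
qed

lemma prim_idem_lower_bidiag:
  fixes D :: "nat \<Rightarrow> 'a::field"
  assumes inj: "inj_on D {..d}"
  defines "P \<equiv> prim_idem d (lower_bidiag (d+1) (\<lambda>i. D (d - i))) D 0"
  shows "supported_on_row (d+1) d P" and "P $$ (d,d) = 1"
    and "P $$ (d,0) = 1 / (\<Prod>l\<in>{1..d}. D 0 - D l)"
proof -
  let ?L = "lower_bidiag (d+1) (\<lambda>i. D (d - i))"
  define R where "R = prim_idem d (upper_bidiag (d+1) D (\<lambda>_. 1)) D 0"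
  have L: "?L \<in> carrier_mat (d+1) (d+1)"
    by (simp add: lower_bidiag_def)
  have "R = rev_mat d P"
    unfolding R_def P_def rev_mat_lower_bidiag[symmetric]
    using alg_hom_prim_idem[OF alg_hom_rev_mat L] by simp
  then have P: "P = rev_mat d R"
    using rev_mat_rev_mat prim_idem_carrier_mat[OF L] unfolding P_def by metis
  note R = prim_idem_upper_bidiag[OF inj, of "\<lambda>_. 1", folded R_def]
  show "supported_on_row (d+1) d P"
    using P R(1) by (auto simp: supported_on_row_def rev_mat_def)
  show "P $$ (d,d) = 1"
    using P R(2) by (simp add: rev_mat_def)
  show "P $$ (d,0) = 1 / (\<Prod>l\<in>{1..d}. D 0 - D l)"
    using P R(3) by (simp add: rev_mat_def)
qed

theorem theorem17p9:
  fixes d :: nat and A As :: "'a::field mat" and E Es :: "nat \<Rightarrow> 'a mat"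
    and th ths phi :: "nat \<Rightarrow> 'a"
  assumes LS: "leonard_system d A As E Es"
    and th: "inj_on th {..d}" "\<forall>i\<le>d. eigenvalue A (th i)" "\<forall>i\<le>d. E i = prim_idem d A th i"
    and ths: "inj_on ths {..d}" "\<forall>i\<le>d. eigenvalue As (ths i)" "\<forall>i\<le>d. Es i = prim_idem d As ths i"
    and phi: "split_seq d A As (\<lambda>i. th (d - i)) ths phi"
  shows "inverse (mat_trace (E 0 * Es 0)) =
           (\<Prod>h<d. th 0 - th (d - h)) * (\<Prod>h<d. ths 0 - ths (d - h)) / (\<Prod>j=1..d. phi j)"
proof -
  have A: "A \<in> carrier_mat (d+1) (d+1)" and As: "As \<in> carrier_mat (d+1) (d+1)"
    using LS unfolding leonard_system_def by auto
  obtain f where f: "alg_iso (d+1) f" and phi_nonzero: "\<forall>j\<in>{1..d}. phi j \<noteq> 0"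
    and fA: "f A = lower_bidiag (d+1) (\<lambda>i. th (d - i))" and fAs: "f As = upper_bidiag (d+1) ths phi"
    using phi unfolding split_seq_def lower_bidiag_def upper_bidiag_def by blast
  have fE: "f (E 0) = prim_idem d (lower_bidiag (d+1) (\<lambda>i. th (d - i))) th 0"
    using th(3) alg_hom_prim_idem[OF alg_iso_imp_alg_hom[OF f] A] fA by simp
  have fEs: "f (Es 0) = prim_idem d (upper_bidiag (d+1) ths phi) ths 0"
    using ths(3) alg_hom_prim_idem[OF alg_iso_imp_alg_hom[OF f] As] fAs by simp
  note P = prim_idem_lower_bidiag[OF th(1), folded fE]
  note Q = prim_idem_upper_bidiag[OF ths(1), of phi, folded fEs]
  have "mat_trace (E 0 * Es 0) = (f (E 0) * f (Es 0)) $$ (d,d)"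
    using mat_trace_mult_alg_iso_supported_on_row[OF f _ _ P(1) _ P(2)] th(3) ths(3)
      prim_idem_carrier_mat[OF A] prim_idem_carrier_mat[OF As] by simp
  also have "\<dots> = (\<Sum>k<d+1. f (E 0) $$ (d,k) * f (Es 0) $$ (k,d))"
    using P(1) Q(1) unfolding supported_on_row_def by (intro index_mult_mat_sum) auto
  also have "\<dots> = f (E 0) $$ (d,0) * f (Es 0) $$ (0,d)"
    by (rule sum_mult_supported_on_row[OF Q(1)]) simp_all
  finally have trace: "mat_trace (E 0 * Es 0) =
      (\<Prod>l\<in>{1..d}. phi l) / ((\<Prod>l\<in>{1..d}. th 0 - th l) * (\<Prod>l\<in>{1..d}. ths 0 - ths l))"
    using P(3) Q(3) by simp
  have reverse: "(\<Prod>h<d. g (d - h)) = (\<Prod>l\<in>{1..d}. g l)" for g :: "nat \<Rightarrow> 'a"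
    by (rule prod.reindex_bij_witness[where i="\<lambda>l. d - l" and j="\<lambda>h. d - h"]) auto
  have "(\<Prod>l\<in>{1..d}. phi l) \<noteq> 0"
    using phi_nonzero by simp
  then show ?thesis
    unfolding trace reverse[of "\<lambda>l. th 0 - th l"] reverse[of "\<lambda>l. ths 0 - ths l"]
    using prod_diff_nonzero[OF th(1)] prod_diff_nonzero[OF ths(1)] by simp
qed

end
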